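(* Let $\pi_0\in\Pi_{\mathrm{all}}$ and let $F$ be a Legendre function whose domain is a closed convex set $\mathcal{K}\supseteq\mathbb{R}^d_{\ge0}$. Suppose $F$ is either (1) quadratic: $F(p)=\frac12p^\top Ap+b^\top p$ with $A\succ0$, or (2) separable: $F(p)=\sum_{i=1}^df(p_i)$ for a one-dimensional convex function $f$. Let $\overline\pi$ be the minimizer of $\pi\mapsto\mathbb{E}_{x\sim\mathcal{D}_{\mathcal{X}}}[\mathsf{B}_F(\pi(x)\parallel\pi_0(x))]$ over the linear subspace $\mathcal{C}^{\dagger\dagger}_{\mathrm{coh}}$. Then $\overline\pi\in\mathcal{C}^\dagger_{\mathrm{coh}}$.
   Context: $\mathcal{X},\mathcal{Y}$ finite, $d=|\mathcal{Y}|$; $\Pi_{\mathrm{all}}=\Delta(\mathcal{Y})^{\mathcal{X}}$, $\Pi^\dagger_{\mathrm{all}}=(\mathbb{R}^d_{+})^{\mathcal{X}}$. $\mathcal{D}_{\mathcal{X}}$ a full-support distribution on $\mathcal{X}$; $\Phi\colon\mathcal{X}\to\mathcal{X}$ an involution. $\mathcal{C}^{\dagger\dagger}_{\mathrm{coh}}=\{\pi\colon\mathcal{X}\to\mathbb{R}^d:\pi(x)=\pi(\Phi(x))\ \forall x\}$ and $\mathcal{C}^\dagger_{\mathrm{coh}}=\mathcal{C}^{\dagger\dagger}_{\mathrm{coh}}\cap\Pi^\dagger_{\mathrm{all}}$. $\mathsf{B}_F(p\parallel q)=F(p)-F(q)-\langle\nabla F(q),p-q\rangle$, extended to boundary points as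 needed. A Legendre function is proper, closed, convex, differentiable on the interior $\Omega$ of its domain, with $\nabla F\colon\Omega\to\mathrm{int}(\mathrm{dom}F^* )$ a bijection. *)

theory Defs
  imports "HOL-Analysis.Analysis"
begin

text \<open>Vectors in R^d are rendered as real^'y with 'y a finite type, d = CARD('y).
A convex function with effective domain K is given by a pair (F, K): F is +infinity outside K.\<close>

definition gradient :: "(real^'n \<Rightarrow> real) \<Rightarrow> real^'n \<Rightarrow> real^'n" where
  "gradient F x = (SOME g. GDERIV F x :> g)"

definition conjugate :: "(real^'n \<Rightarrow> real) \<Rightarrow> (real^'n) set \<Rightarrow> real^'n \<Rightarrow> ereal" where
  "conjugate F K y = (SUP x\<in>K. ereal (inner x y - F x))"

definition conj_dom :: "(real^'n \<Rightarrow> real) \<Rightarrow> (real^'n) set \<Rightarrow> (real^'n) set" where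
  "conj_dom F K = {y. conjugate F K y < \<infinity>}"

definition legendre :: "(real^'n \<Rightarrow> real) \<Rightarrow> (real^'n) set \<Rightarrow> bool" where
  "legendre F K \<longleftrightarrow>
     K \<noteq> {} \<and> convex K \<and> convex_on K F \<and>
     closed {(x, t). x \<in> K \<and> F x \<le> t} \<and>
     (\<forall>x\<in>interior K. F differentiable (at x)) \<and>
     bij_betw (gradient F) (interior K) (interior (conj_dom F K))"

text \<open>One-sided directional derivative of a convex function at q in direction v
(for convex F the difference quotient is monotone, so the limit t -> 0+ is an infimum).\<close>
definition dir_deriv :: "(real^'n \<Rightarrow> real) \<Rightarrow> real^'n \<Rightarrow> real^'n \<Rightarrow> ereal" where
  "dir_deriv F q v = (INF t\<in>{0<..1}. ereal ((F (q + t *\<^sub>R v) - F q) / t))"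

text \<open>Bregman divergence B_F(p || q) = F p - F q - <grad F q, p - q>, extended to boundary
points of the domain via the directional derivative, and +infinity for p outside dom F.\<close>
definition bregman :: "(real^'n \<Rightarrow> real) \<Rightarrow> (real^'n) set \<Rightarrow> real^'n \<Rightarrow> real^'n \<Rightarrow> ereal" where
  "bregman F K p q =
     (if p \<in> K then ereal (F p - F q) - dir_deriv F q (p - q) else \<infinity>)"

definition prob_simplex :: "(real^'n) set" where
  "prob_simplex = {p. (\<forall>i. 0 \<le> p $ i) \<and> (\<Sum>i\<in>UNIV. p $ i) = 1}"

definition nonneg_orthant :: "(real^'n) set" where
  "nonneg_orthant = {p. \<forall>i. 0 \<le> p $ i}"

definition coh_lin :: "('x \<Rightarrow> 'x) \<Rightarrow> ('x \<Rightarrow> real^'n) set" where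
  "coh_lin \<Phi> = {\<pi>. \<forall>x. \<pi> x = \<pi> (\<Phi> x)}"

definition coh_pos :: "('x \<Rightarrow> 'x) \<Rightarrow> ('x \<Rightarrow> real^'n) set" where
  "coh_pos \<Phi> = coh_lin \<Phi> \<inter> {\<pi>. \<forall>x. \<pi> x \<in> nonneg_orthant}"

definition bregman_obj :: "('x::finite \<Rightarrow> real) \<Rightarrow> (real^'n \<Rightarrow> real) \<Rightarrow> (real^'n) set
     \<Rightarrow> ('x \<Rightarrow> real^'n) \<Rightarrow> ('x \<Rightarrow> real^'n) \<Rightarrow> ereal" where
  "bregman_obj D F K \<pi>0 \<pi> = (\<Sum>x\<in>UNIV. ereal (D x) * bregman F K (\<pi> x) (\<pi>0 x))"

end

theory Submission
  imports Defs
begin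

text \<open>On the coherent subspace the objective pairs each x with \<Phi> x.

For quadratic F the Bregman divergence is half the squared A-norm of p - q, and for coherent \<pi>
the objective equals, up to an additive constant, the sum over x of (D x + D (\<Phi> x)) times the
squared A-distance from \<pi> x to the D-weighted mean c x of \<pi>0 x and \<pi>0 (\<Phi> x). Hence the
minimiser is c itself, a convex combination of probability vectors.

For separable F the Legendre property forces f to be strictly convex: if f were affine on an
interval, F would differ by a constant on translates of one ball around two distinct diagonal
points, so the gradient of F would agree there. If the minimiser had a negative k-th coordinate
somewhere, raising that coordinate to 0 at every x would preserve coherence, and because the
reference points \<pi>0 x are nonnegative, strict convexity makes each affected Bregman term strictly
smaller: F drops by f a - f 0, while the directional derivative at \<pi>0 x drops by at most
2 (f (a / 2) - f 0), where a < 0 is the raised coordinate. The optimal value is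
finite thanks to the coherent competitor min (\<pi>0 x) (\<pi>0 (\<Phi> x)), which lies coordinatewise
below \<pi>0 x.\<close>

section \<open>Directional derivatives and Bregman divergences\<close>

definition diff_quotient :: "(real^'n \<Rightarrow> real) \<Rightarrow> real^'n \<Rightarrow> real^'n \<Rightarrow> real \<Rightarrow> real" where
  "diff_quotient F q v t = (F (q + t *\<^sub>R v) - F q) / t"

lemma dir_deriv_eq_INF: "dir_deriv F q v = (INF t\<in>{0<..1}. ereal (diff_quotient F q v t))"
  by (simp add: dir_deriv_def diff_quotient_def)

lemma dir_deriv_le_diff_quotient:
  "0 < t \<Longrightarrow> t \<le> 1 \<Longrightarrow> dir_deriv F q v \<le> ereal (diff_quotient F q v t)"
  unfolding dir_deriv_eq_INF by (rule INF_lower) auto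

lemma dir_deriv_ge:
  "(\<And>t. 0 < t \<Longrightarrow> t \<le> 1 \<Longrightarrow> B \<le> diff_quotient F q v t) \<Longrightarrow> ereal B \<le> dir_deriv F q v"
  unfolding dir_deriv_eq_INF by (rule INF_greatest) auto

lemma dir_deriv_le_diff: "dir_deriv F q v \<le> ereal (F (q + v) - F q)"
  using dir_deriv_le_diff_quotient[of 1 F q v] by (simp add: diff_quotient_def)

lemma convex_segment_mem:
  assumes "convex K" "q \<in> K" "p \<in> K" "0 \<le> t" "t \<le> 1"
  shows "q + t *\<^sub>R (p - q) \<in> K"
proof -
  have "q + t *\<^sub>R (p - q) = (1 - t) *\<^sub>R q + t *\<^sub>R p" by (simp add: algebra_simps)
  then show ?thesis using assms by (metis convexD_alt)
qed

lemma diff_quotient_mono: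
  assumes F: "convex_on K F" and K: "convex K" and q: "q \<in> K" and p: "p \<in> K"
    and st: "0 < s" "s \<le> t" "t \<le> 1"
  shows "diff_quotient F q (p - q) s \<le> diff_quotient F q (p - q) t"
proof -
  define z where "z = q + t *\<^sub>R (p - q)"
  have z: "z \<in> K" using convex_segment_mem[OF K q p] st unfolding z_def by simp
  have "q + s *\<^sub>R (p - q) = (1 - s/t) *\<^sub>R q + (s/t) *\<^sub>R z"
    using st by (simp add: z_def algebra_simps)
  then have "F (q + s *\<^sub>R (p - q)) \<le> (1 - s/t) * F q + (s/t) * F z"
    using convex_onD[OF F, of "s/t" q z] st q z by simp
  then have "F (q + s *\<^sub>R (p - q)) - F q \<le> (s/t) * (F z - F q)"
    by (simp add: algebra_simps)
  then show ?thesis using st unfolding diff_quotient_def z_def by (simp add: field_simps)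
qed

lemma bregman_nonneg: "0 \<le> bregman F K p q"
  using dir_deriv_le_diff[of F q "p - q"] unfolding bregman_def
  by (cases "dir_deriv F q (p - q)") auto

lemma bregman_less_top_iff:
  "bregman F K p q < \<infinity> \<longleftrightarrow> p \<in> K \<and> (\<exists>\<delta>. dir_deriv F q (p - q) = ereal \<delta>)"
  using dir_deriv_le_diff[of F q "p - q"] unfolding bregman_def
  by (cases "dir_deriv F q (p - q)") auto

lemma bregman_real:
  "p \<in> K \<Longrightarrow> dir_deriv F q (p - q) = ereal \<delta> \<Longrightarrow> bregman F K p q = ereal (F p - F q - \<delta>)"
  by (simp add: bregman_def)

section \<open>The objective on coherent policies\<close>

lemma sum_strict_mono_ex1_ereal:
  fixes g h :: "'a \<Rightarrow> ereal"
  assumes A: "finite A" and g0: "\<And>x. x \<in> A \<Longrightarrow> 0 \<le> g x" and gh: "\<And>x. x \<in> A \<Longrightarrow> g x \<le> h x"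
    and h: "sum h A < \<infinity>" and x0: "x0 \<in> A" and lt: "g x0 < h x0"
  shows "sum g A < sum h A"
proof -
  let ?B = "A - {x0}"
  have "sum g ?B \<le> sum h ?B" using gh by (intro sum_mono) auto
  moreover have "sum h ?B \<noteq> \<infinity>" using h A by (auto simp: sum_Pinfty)
  moreover have "0 \<le> sum g ?B" using g0 by (intro sum_nonneg) auto
  ultimately have "sum g ?B + g x0 < sum h ?B + h x0"
    using lt by (intro ereal_add_strict_mono) auto
  then show ?thesis using A x0 by (simp add: sum.remove add.commute)
qed

lemma bregman_obj_less_top_iff:
  assumes "\<forall>x. 0 < D x"
  shows "bregman_obj D F K \<pi>0 \<pi> < \<infinity> \<longleftrightarrow> (\<forall>x. bregman F K (\<pi> x) (\<pi>0 x) < \<infinity>)"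
proof -
  have "ereal (D x) * bregman F K (\<pi> x) (\<pi>0 x) = \<infinity> \<longleftrightarrow> bregman F K (\<pi> x) (\<pi>0 x) = \<infinity>" for x
    using assms[rule_format, of x] bregman_nonneg[of F K "\<pi> x" "\<pi>0 x"] by (cases "bregman F K (\<pi> x) (\<pi>0 x)") auto
  then show ?thesis unfolding bregman_obj_def by (simp add: less_top sum_Pinfty)
qed

lemma bregman_obj_strict_mono:
  assumes D: "\<forall>x. 0 < D x"
    and le: "\<And>x. bregman F K (\<pi>' x) (\<pi>0 x) \<le> bregman F K (\<pi> x) (\<pi>0 x)"
    and less: "bregman F K (\<pi>' x0) (\<pi>0 x0) < bregman F K (\<pi> x0) (\<pi>0 x0)"
    and fin: "bregman_obj D F K \<pi>0 \<pi> < \<infinity>"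
  shows "bregman_obj D F K \<pi>0 \<pi>' < bregman_obj D F K \<pi>0 \<pi>"
  unfolding bregman_obj_def
proof (rule sum_strict_mono_ex1_ereal)
  show "0 \<le> ereal (D x) * bregman F K (\<pi>' x) (\<pi>0 x)" for x
    using D[rule_format, of x] bregman_nonneg[of F K "\<pi>' x" "\<pi>0 x"]
    by (simp add: ereal_zero_le_0_iff)
  show "ereal (D x) * bregman F K (\<pi>' x) (\<pi>0 x) \<le> ereal (D x) * bregman F K (\<pi> x) (\<pi>0 x)" for x
    using D le by (simp add: ereal_mult_left_mono less_imp_le)
  show "ereal (D x0) * bregman F K (\<pi>' x0) (\<pi>0 x0) < ereal (D x0) * bregman F K (\<pi> x0) (\<pi>0 x0)"
    using D less fin by (intro ereal_mult_strict_left_mono) (auto simp: bregman_obj_less_top_iff[OF D])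
qed (use fin in \<open>auto simp: bregman_obj_def\<close>)

lemma coherent_minimizer_bregman_less_top:
  assumes D: "\<forall>x. 0 < D x" and \<rho>: "\<rho> \<in> coh_lin \<Phi>" "bregman_obj D F K \<pi>0 \<rho> < \<infinity>"
    and min_opt: "\<forall>\<pi>\<in>coh_lin \<Phi>. bregman_obj D F K \<pi>0 \<pi>bar \<le> bregman_obj D F K \<pi>0 \<pi>"
  shows "\<forall>x. bregman F K (\<pi>bar x) (\<pi>0 x) < \<infinity>"
proof -
  have "bregman_obj D F K \<pi>0 \<pi>bar < \<infinity>" using min_opt \<rho> by (auto intro: le_less_trans)
  then show ?thesis by (rule bregman_obj_less_top_iff[OF D, THEN iffD1])
qed

lemma prob_simplex_subset_nonneg_orthant: "prob_simplex \<subseteq> nonneg_orthant"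
  unfolding prob_simplex_def nonneg_orthant_def by auto

lemma sum_reindex_involution:
  fixes g :: "'x::finite \<Rightarrow> 'a::comm_monoid_add"
  assumes "\<forall>x. \<Phi> (\<Phi> x) = x"
  shows "(\<Sum>x\<in>UNIV. g (\<Phi> x)) = (\<Sum>x\<in>UNIV. g x)"
  by (rule sum.reindex_bij_witness[of _ \<Phi> \<Phi>]) (use assms in auto)

lemma coh_lin_iff: "\<pi> \<in> coh_lin \<Phi> \<longleftrightarrow> (\<forall>x. \<pi> (\<Phi> x) = \<pi> x)"
  unfolding coh_lin_def mem_Collect_eq by (simp only: eq_commute)

section \<open>Quadratic potentials\<close>

definition quad_form :: "real^'n^'n \<Rightarrow> real^'n \<Rightarrow> real" where
  "quad_form A u = u \<bullet> (A *v u)"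

lemma symmetric_matrix_inner_commute:
  fixes A :: "real^'n^'n"
  assumes "transpose A = A"
  shows "u \<bullet> (A *v w) = w \<bullet> (A *v u)"
proof -
  have "u \<bullet> (A *v w) = (u v* A) \<bullet> w" by (simp add: dot_lmul_matrix)
  also have "u v* A = A *v u" using vector_transpose_matrix[of u A] assms by simp
  finally show ?thesis by (simp add: inner_commute)
qed

lemma quad_form_add:
  assumes "transpose A = A"
  shows "quad_form A (x + y) = quad_form A x + 2 * (x \<bullet> (A *v y)) + quad_form A y"
  unfolding quad_form_def using symmetric_matrix_inner_commute[OF assms, of y x]
  by (simp add: matrix_vector_right_distrib inner_add_left inner_add_right)

lemma quad_form_scaleR: "quad_form A (t *\<^sub>R u) = t\<^sup>2 * quad_form A u"
  unfolding quad_form_def by (simp add: matrix_vector_mult_scaleR power2_eq_square)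

lemma quad_form_nonneg:
  "\<forall>v. v \<noteq> 0 \<longrightarrow> 0 < v \<bullet> (A *v v) \<Longrightarrow> 0 \<le> quad_form A u"
  unfolding quad_form_def by (cases "u = 0") (auto intro: less_imp_le)

lemma bregman_quadratic:
  fixes A :: "real^'n^'n" and F :: "real^'n \<Rightarrow> real"
  assumes sym: "transpose A = A" and pd: "\<forall>v. v \<noteq> 0 \<longrightarrow> 0 < v \<bullet> (A *v v)"
    and F: "\<forall>p\<in>K. F p = (1/2) * (p \<bullet> (A *v p)) + b \<bullet> p"
    and K: "convex K" and p: "p \<in> K" and q: "q \<in> K"
  shows "bregman F K p q = ereal ((1/2) * quad_form A (p - q))"
proof -
  define v where "v = p - q"
  define L where "L = q \<bullet> (A *v v) + b \<bullet> v"
  define k where "k = quad_form A v"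
  have k: "0 \<le> k" unfolding k_def using quad_form_nonneg[OF pd] .
  have F_step: "F (q + t *\<^sub>R v) - F q = t * L + t\<^sup>2 / 2 * k" if "0 \<le> t" "t \<le> 1" for t
  proof -
    have "q + t *\<^sub>R v \<in> K" using convex_segment_mem[OF K q p] that unfolding v_def .
    moreover have "quad_form A (q + t *\<^sub>R v) = quad_form A q + 2 * t * (q \<bullet> (A *v v)) + t\<^sup>2 * k"
      by (simp add: quad_form_add[OF sym] quad_form_scaleR k_def matrix_vector_mult_scaleR)
    ultimately show ?thesis using F q unfolding quad_form_def L_def by (simp add: algebra_simps)
  qed
  have quotient: "diff_quotient F q v t = L + t / 2 * k" if "0 < t" "t \<le> 1" for t
    using F_step[of t] that unfolding diff_quotient_def by (simp add: field_simps power2_eq_square)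
  have "dir_deriv F q v = ereal L"
  proof (rule antisym)
    show "dir_deriv F q v \<le> ereal L"
    proof (rule ereal_le_epsilon2)
      fix e :: real assume e: "0 < e"
      define t where "t = min 1 (e / (k + 1))"
      have t: "0 < t" "t \<le> 1" using e k unfolding t_def by auto
      have "t * k \<le> e / (k + 1) * k" using k unfolding t_def by (intro mult_right_mono) auto
      also have "\<dots> \<le> e" using e k by (simp add: field_simps)
      finally have "L + t / 2 * k \<le> L + e" using e by simp
      then show "dir_deriv F q v \<le> ereal L + ereal e"
        using dir_deriv_le_diff_quotient[OF t, of F q v] quotient[OF t] by (simp add: order_trans)
    qed
    show "ereal L \<le> dir_deriv F q v" using quotient k by (intro dir_deriv_ge) simp
  qed
  moreover have "F p - F q - L = (1/2) * k" using F_step[of 1] unfolding v_def by simp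
  ultimately show ?thesis using bregman_real[OF p] unfolding v_def k_def by simp
qed

lemma quad_form_weighted_mean:
  fixes A :: "real^'n^'n"
  assumes sym: "transpose A = A" and W: "D1 + D2 > 0"
    and c: "c = (1 / (D1 + D2)) *\<^sub>R (D1 *\<^sub>R a + D2 *\<^sub>R b)"
  shows "D1 * quad_form A (p - a) + D2 * quad_form A (p - b)
       = (D1 + D2) * quad_form A (p - c) + (D1 * quad_form A (c - a) + D2 * quad_form A (c - b))"
proof -
  have "(D1 + D2) *\<^sub>R c = D1 *\<^sub>R a + D2 *\<^sub>R b" using W unfolding c by simp
  then have "D1 *\<^sub>R (c - a) + D2 *\<^sub>R (c - b) = 0" by (simp add: algebra_simps)
  then have "(p - c) \<bullet> (A *v (D1 *\<^sub>R (c - a) + D2 *\<^sub>R (c - b))) = 0" by simp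
  then have cross: "D1 * ((p - c) \<bullet> (A *v (c - a))) + D2 * ((p - c) \<bullet> (A *v (c - b))) = 0"
    by (simp add: matrix_vector_right_distrib matrix_vector_mult_scaleR inner_add_right)
  have "D1 * quad_form A (u + w) + D2 * quad_form A (u + w')
      = (D1 + D2) * quad_form A u + (D1 * quad_form A w + D2 * quad_form A w')
        + 2 * (D1 * (u \<bullet> (A *v w)) + D2 * (u \<bullet> (A *v w')))" for u w w'
    by (simp add: quad_form_add[OF sym] algebra_simps)
  from this[of "p - c" "c - a" "c - b"] show ?thesis using cross by simp
qed

lemma bregman_obj_quadratic:
  fixes A :: "real^'n^'n" and F :: "real^'n \<Rightarrow> real"
  assumes sym: "transpose A = A" and pd: "\<forall>v. v \<noteq> 0 \<longrightarrow> 0 < v \<bullet> (A *v v)"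
    and F: "\<forall>p\<in>K. F p = (1/2) * (p \<bullet> (A *v p)) + b \<bullet> p"
    and K: "convex K" and \<pi>: "\<forall>x. \<pi> x \<in> K" and \<pi>0: "\<forall>x. \<pi>0 x \<in> K"
  shows "bregman_obj D F K \<pi>0 \<pi> = ereal ((1/2) * (\<Sum>x\<in>UNIV. D x * quad_form A (\<pi> x - \<pi>0 x)))"
proof -
  have "ereal (D x) * bregman F K (\<pi> x) (\<pi>0 x) = ereal ((1/2) * (D x * quad_form A (\<pi> x - \<pi>0 x)))" for x
    using bregman_quadratic[OF sym pd F K] \<pi> \<pi>0 by simp
  then show ?thesis unfolding bregman_obj_def by (simp add: sum_distrib_left)
qed

lemma sum_quad_form_nonpos_imp_zero:
  fixes w :: "'x::finite \<Rightarrow> real" and u :: "'x \<Rightarrow> real^'n"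
  assumes w: "\<forall>x. 0 < w x" and pd: "\<forall>v. v \<noteq> 0 \<longrightarrow> 0 < v \<bullet> (A *v v)"
    and le: "(\<Sum>x\<in>UNIV. w x * quad_form A (u x)) \<le> 0"
  shows "u x = 0"
proof (rule ccontr)
  assume "u x \<noteq> 0"
  then have "0 < w x * quad_form A (u x)" using w pd by (simp add: quad_form_def)
  moreover have "0 \<le> w y * quad_form A (u y)" for y
    using w[rule_format, of y] quad_form_nonneg[OF pd] by simp
  ultimately have "0 < (\<Sum>x\<in>UNIV. w x * quad_form A (u x))" by (intro sum_pos2[of UNIV x]) auto
  then show False using le by simp
qed

lemma quad_objective_coherent_split:
  fixes D :: "'x::finite \<Rightarrow> real" and a \<pi> c :: "'x \<Rightarrow> real^'n" and A :: "real^'n^'n"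
  assumes sym: "transpose A = A" and D: "\<forall>x. 0 < D x" and invol: "\<forall>x. \<Phi> (\<Phi> x) = x"
    and c: "\<And>x. c x = (1 / (D x + D (\<Phi> x))) *\<^sub>R (D x *\<^sub>R a x + D (\<Phi> x) *\<^sub>R a (\<Phi> x))"
    and \<pi>: "\<forall>x. \<pi> (\<Phi> x) = \<pi> x"
  shows "2 * (\<Sum>x\<in>UNIV. D x * quad_form A (\<pi> x - a x))
       = (\<Sum>x\<in>UNIV. (D x + D (\<Phi> x)) * quad_form A (\<pi> x - c x))
         + 2 * (\<Sum>x\<in>UNIV. D x * quad_form A (c x - a x))"
proof -
  define G where "G x p = D x * quad_form A (p - a x) + D (\<Phi> x) * quad_form A (p - a (\<Phi> x))" for x p
  have paired: "2 * (\<Sum>x\<in>UNIV. D x * quad_form A (\<rho> x - a x)) = (\<Sum>x\<in>UNIV. G x (\<rho> x))"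
    if \<rho>: "\<forall>x. \<rho> (\<Phi> x) = \<rho> x" for \<rho>
  proof -
    have "(\<Sum>x\<in>UNIV. D x * quad_form A (\<rho> x - a x))
        = (\<Sum>x\<in>UNIV. D (\<Phi> x) * quad_form A (\<rho> (\<Phi> x) - a (\<Phi> x)))"
      using sum_reindex_involution[OF invol, of "\<lambda>x. D x * quad_form A (\<rho> x - a x)"] by simp
    then show ?thesis using \<rho> unfolding G_def by (simp add: sum.distrib)
  qed
  have c_coherent: "\<forall>x. c (\<Phi> x) = c x" using invol by (simp add: c add.commute)
  have "G x (\<pi> x) = (D x + D (\<Phi> x)) * quad_form A (\<pi> x - c x) + G x (c x)" for x
    unfolding G_def by (rule quad_form_weighted_mean[OF sym _ c]) (use D in \<open>simp add: add_pos_pos\<close>)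
  then have "(\<Sum>x\<in>UNIV. G x (\<pi> x))
      = (\<Sum>x\<in>UNIV. (D x + D (\<Phi> x)) * quad_form A (\<pi> x - c x)) + (\<Sum>x\<in>UNIV. G x (c x))"
    by (simp only: sum.distrib)
  then show ?thesis using paired[OF \<pi>] paired[OF c_coherent] by simp
qed

lemma coherent_minimizer_nonneg_quadratic:
  fixes D :: "'x::finite \<Rightarrow> real" and \<pi>0 \<pi>bar :: "'x \<Rightarrow> real^'n" and A :: "real^'n^'n"
  assumes D: "\<forall>x. 0 < D x" and invol: "\<forall>x. \<Phi> (\<Phi> x) = x"
    and \<pi>0: "\<forall>x. \<pi>0 x \<in> nonneg_orthant"
    and K: "convex K" and K_orth: "nonneg_orthant \<subseteq> K"
    and sym: "transpose A = A" and pd: "\<forall>v. v \<noteq> 0 \<longrightarrow> 0 < v \<bullet> (A *v v)"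
    and F: "\<forall>p\<in>K. F p = (1/2) * (p \<bullet> (A *v p)) + b \<bullet> p"
    and min_mem: "\<pi>bar \<in> coh_lin \<Phi>"
    and min_opt: "\<forall>\<pi>\<in>coh_lin \<Phi>. bregman_obj D F K \<pi>0 \<pi>bar \<le> bregman_obj D F K \<pi>0 \<pi>"
  shows "\<forall>x. \<pi>bar x \<in> nonneg_orthant"
proof -
  define J where "J \<pi> = (\<Sum>x\<in>UNIV. D x * quad_form A (\<pi> x - \<pi>0 x))" for \<pi>
  define c where "c x = (1 / (D x + D (\<Phi> x))) *\<^sub>R (D x *\<^sub>R \<pi>0 x + D (\<Phi> x) *\<^sub>R \<pi>0 (\<Phi> x))" for x
  have \<pi>0_K: "\<forall>x. \<pi>0 x \<in> K" using \<pi>0 K_orth by blast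
  note obj = bregman_obj_quadratic[where D = D, OF sym pd F K _ \<pi>0_K, folded J_def]
  have c_coh: "c \<in> coh_lin \<Phi>" unfolding coh_lin_def c_def using invol by (simp add: add.commute)
  have c_nonneg: "c x \<in> nonneg_orthant" for x
    using \<pi>0 D[rule_format, of x] D[rule_format, of "\<Phi> x"]
    by (auto simp: nonneg_orthant_def c_def add_pos_pos less_imp_le)
  then have c_K: "\<forall>x. c x \<in> K" using K_orth by blast
  have "\<forall>x. bregman F K (\<pi>bar x) (\<pi>0 x) < \<infinity>"
    by (rule coherent_minimizer_bregman_less_top[OF D c_coh _ min_opt]) (simp add: obj[OF c_K])
  then have \<pi>bar_K: "\<forall>x. \<pi>bar x \<in> K" unfolding bregman_less_top_iff by blast
  have "J \<pi>bar \<le> J c" using min_opt[rule_format, OF c_coh] obj[OF c_K] obj[OF \<pi>bar_K] by simp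
  moreover have "\<forall>x. \<pi>bar (\<Phi> x) = \<pi>bar x" using min_mem unfolding coh_lin_iff .
  then have "2 * J \<pi>bar = (\<Sum>x\<in>UNIV. (D x + D (\<Phi> x)) * quad_form A (\<pi>bar x - c x)) + 2 * J c"
    unfolding J_def by (rule quad_objective_coherent_split[OF sym D invol c_def])
  ultimately have "(\<Sum>x\<in>UNIV. (D x + D (\<Phi> x)) * quad_form A (\<pi>bar x - c x)) \<le> 0" by linarith
  then have "\<pi>bar x - c x = 0" for x
    by (rule sum_quad_form_nonpos_imp_zero[rotated 2]) (use D pd in \<open>auto simp: add_pos_pos\<close>)
  then show ?thesis using c_nonneg by simp
qed

section \<open>Separable potentials\<close>

lemma convex_on_slope_mono:
  fixes f :: "real \<Rightarrow> real"
  assumes f: "convex_on I f" and I: "x1 \<in> I" "x2 \<in> I" "y1 \<in> I" "y2 \<in> I"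
    and le: "x1 \<le> y1" "x2 \<le> y2" "x1 < x2" "y1 < y2"
  shows "(f x1 - f x2) / (x1 - x2) \<le> (f y1 - f y2) / (y1 - y2)"
proof -
  have "(f x1 - f x2) / (x1 - x2) \<le> (f x1 - f y2) / (x1 - y2)"
    using convex_on_slope_le(1)[OF f I(1) I(4), of x2] le by (cases "x2 = y2") auto
  also have "\<dots> \<le> (f y1 - f y2) / (y1 - y2)"
    using convex_on_slope_le(2)[OF f I(1) I(4), of y1] le by (cases "x1 = y1") auto
  finally show ?thesis .
qed

lemma convex_on_affine_of_midpoint:
  fixes f :: "real \<Rightarrow> real"
  assumes f: "convex_on I f" and I: "a \<in> I" "b \<in> I" and ab: "a < b"
    and mid: "(f a + f b) / 2 \<le> f ((a + b) / 2)"
  shows "\<exists>\<sigma> c. \<forall>x\<in>{a..b}. f x = c + \<sigma> * x"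
proof -
  define m where "m = (a + b) / 2"
  define \<sigma> where "\<sigma> = (f m - f b) / (m - b)"
  have m: "a < m" "m < b" using ab unfolding m_def by auto
  have sub: "{a..b} \<subseteq> I" using atMostAtLeast_subset_convex[OF convex_on_imp_convex[OF f] I ab] .
  then have mI: "m \<in> I" using m by auto
  have "(1 - 1/2) *\<^sub>R a + (1/2) *\<^sub>R b = m" unfolding m_def by simp
  then have "f m \<le> (f a + f b) / 2" using convex_onD[OF f, of "1/2" a b] I by simp
  then have "f a - f m = f m - f b" using mid unfolding m_def by simp
  moreover have "a - m = m - b" unfolding m_def by (simp add: field_simps)
  ultimately have slope_am: "(f a - f m) / (a - m) = \<sigma>" unfolding \<sigma>_def by simp
  have "f x = f m + \<sigma> * (x - m)" if x: "a \<le> x" "x \<le> b" for x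
  proof -
    have xI: "x \<in> I" using sub x by auto
    consider "x < m" | "x = m" | "m < x" by linarith
    then show ?thesis
    proof cases
      case 1
      have "(f a - f m) / (a - m) \<le> (f x - f m) / (x - m)"
        using convex_on_slope_le(2)[OF f I(1) mI, of x] 1 x by (cases "x = a") auto
      moreover have "(f x - f m) / (x - m) \<le> \<sigma>"
        using convex_on_slope_mono[OF f xI mI mI I(2)] 1 m unfolding \<sigma>_def by simp
      ultimately have "(f x - f m) / (x - m) = \<sigma>" using slope_am by simp
      then show ?thesis using 1 by (simp add: field_simps)
    next
      case 3
      have "(f m - f x) / (m - x) \<le> \<sigma>"
        using convex_on_slope_le(1)[OF f mI I(2), of x] 3 x unfolding \<sigma>_def by (cases "x = b") auto
      moreover have "(f a - f m) / (a - m) \<le> (f m - f x) / (m - x)"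
        using convex_on_slope_mono[OF f I(1) mI mI xI] 3 m by simp
      ultimately have "(f m - f x) / (m - x) = \<sigma>" using slope_am by simp
      then show ?thesis using 3 by (simp add: field_simps)
    qed simp
  qed
  then have "\<forall>x\<in>{a..b}. f x = (f m - \<sigma> * m) + \<sigma> * x" by (simp add: algebra_simps)
  then show ?thesis by blast
qed

lemma convex_on_increment_le:
  fixes f :: "real \<Rightarrow> real"
  assumes f: "convex_on I f" and I: "a \<in> I" "y \<in> I" and a: "a < 0" and y: "0 \<le> y"
    and t: "0 < t" "t \<le> 1/2"
  shows "f (y + t * a) - f y \<le> 2 * t * (f (a/2) - f 0)"
proof -
  have sub: "{a..y} \<subseteq> I" using atMostAtLeast_subset_convex[OF convex_on_imp_convex[OF f] I] a y by simp
  have ta: "a/2 \<le> t * a" "t * a < 0"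
    using mult_right_mono_neg[of t "1/2" a] t a by (auto simp: mult_pos_neg)
  then have "a \<le> y + t * a" "y + t * a \<le> y" using a y by linarith+
  then have mem: "a/2 \<in> I" "0 \<in> I" "y + t * a \<in> I" using sub a y by auto
  have "(f (a/2) - f 0) / (a/2 - 0) \<le> (f (y + t * a) - f y) / (y + t * a - y)"
    by (rule convex_on_slope_mono[OF f mem I(2)]) (use ta a y in linarith)+
  then have "t * a * ((f (y + t * a) - f y) / (t * a)) \<le> t * a * ((f (a/2) - f 0) / (a/2 - 0))"
    using ta by (intro mult_left_mono_neg) auto
  also have "\<dots> = 2 * t * (f (a/2) - f 0)" using a by (simp add: field_simps)
  finally show ?thesis using ta by (simp split: if_splits)
qed

lemma convex_on_increment_ge:
  fixes f :: "real \<Rightarrow> real"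
  assumes f: "convex_on I f" and I: "x \<in> I" "x + 1 \<in> I" "x + s * v \<in> I"
    and s: "0 < s" and v: "v \<le> 0"
  shows "s * v * (f (x + 1) - f x) \<le> f (x + s * v) - f x"
proof (cases "v = 0")
  case False
  define z where "z = x + s * v"
  have z: "z < x" using s v False unfolding z_def by (simp add: mult_pos_neg)
  have "(f z - f x) / (z - x) \<le> (f z - f (x + 1)) / (z - (x + 1))"
    using convex_on_slope_le(1)[OF f I(3) I(2), of x] z unfolding z_def by simp
  also have "\<dots> \<le> (f x - f (x + 1)) / (x - (x + 1))"
    using convex_on_slope_le(2)[OF f I(3) I(2), of x] z unfolding z_def by simp
  finally have "(f z - f x) / (z - x) \<le> f (x + 1) - f x" by simp
  then have "(z - x) * (f (x + 1) - f x) \<le> f z - f x" using z by (simp add: divide_le_eq mult.commute)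
  then show ?thesis unfolding z_def by simp
qed simp

lemma separable_diff_single_coord:
  fixes F :: "real^'n \<Rightarrow> real"
  assumes F: "\<forall>p\<in>K. F p = (\<Sum>i\<in>UNIV. f (p $ i))" and K: "p \<in> K" "p' \<in> K"
    and same: "\<forall>i. i \<noteq> k \<longrightarrow> p $ i = p' $ i"
  shows "F p - F p' = f (p $ k) - f (p' $ k)"
proof -
  have "F p - F p' = (\<Sum>i\<in>UNIV. f (p $ i) - f (p' $ i))" using F K by (simp add: sum_subtractf)
  also have "\<dots> = (\<Sum>i\<in>UNIV. if i = k then f (p $ k) - f (p' $ k) else 0)"
    using same by (intro sum.cong) auto
  finally show ?thesis by simp
qed

lemma nonneg_mem_of_orthant_subset:
  assumes "K = {p. \<forall>i. p $ i \<in> I}" "nonneg_orthant \<subseteq> (K :: (real^'n) set)" "0 \<le> r"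
  shows "r \<in> I"
proof -
  have "(\<chi> j. r) \<in> (nonneg_orthant :: (real^'n) set)" using assms(3) by (simp add: nonneg_orthant_def)
  then show ?thesis using assms(1,2) by auto
qed

lemma has_derivative_eq_of_const_diff:
  fixes F :: "real^'n \<Rightarrow> real"
  assumes d1: "(F has_derivative D1) (at P1)" and d2: "(F has_derivative D2) (at P2)"
    and r: "0 < r" and const: "\<forall>h. norm h < r \<longrightarrow> F (P2 + h) - F (P1 + h) = C"
  shows "D1 = D2"
proof -
  have shift: "((\<lambda>h. F (P + h)) has_derivative D) (at 0)" if "(F has_derivative D) (at P)" for P D
  proof -
    have "((\<lambda>h. P + h) has_derivative (\<lambda>h. h)) (at 0)" by (auto intro!: derivative_eq_intros)
    from has_derivative_compose[OF this, of F D] that show ?thesis by simp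
  qed
  have "((\<lambda>h. F (P2 + h) - F (P1 + h)) has_derivative (\<lambda>h. D2 h - D1 h)) (at 0)"
    using has_derivative_diff[OF shift[OF d2] shift[OF d1]] .
  moreover have "((\<lambda>h. F (P2 + h) - F (P1 + h)) has_derivative (\<lambda>h. 0)) (at 0)"
  proof (rule has_derivative_transform_within_open[of "\<lambda>h. C" _ _ _ "ball 0 r"])
    show "\<And>h. h \<in> ball 0 r \<Longrightarrow> C = F (P2 + h) - F (P1 + h)" using const by simp
  qed (use r in simp_all)
  ultimately have "(\<lambda>h. D2 h - D1 h) = (\<lambda>h. 0)" by (rule has_derivative_unique)
  then have "D2 h - D1 h = 0" for h by metis
  then show ?thesis by (intro ext) simp
qed

lemma gradient_eq_of_has_derivative:
  assumes "(F has_derivative D) (at P1)" "(F has_derivative D) (at P2)"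
  shows "gradient F P1 = gradient F P2"
proof -
  have iff: "GDERIV F P :> g \<longleftrightarrow> (\<lambda>h. h \<bullet> g) = D" if d: "(F has_derivative D) (at P)" for P g
  proof
    assume "GDERIV F P :> g"
    then show "(\<lambda>h. h \<bullet> g) = D" using d unfolding gderiv_def by (rule has_derivative_unique)
  qed (use d in \<open>simp add: gderiv_def\<close>)
  have "(\<lambda>g. GDERIV F P1 :> g) = (\<lambda>g. GDERIV F P2 :> g)" using iff[OF assms(1)] iff[OF assms(2)] by simp
  then show ?thesis unfolding gradient_def by simp
qed

lemma legendre_eq_of_const_diff:
  fixes F :: "real^'n \<Rightarrow> real"
  assumes leg: "legendre F K" and P: "P1 \<in> interior K" "P2 \<in> interior K"
    and r: "0 < r" and const: "\<forall>h. norm h < r \<longrightarrow> F (P2 + h) - F (P1 + h) = C"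
  shows "P1 = P2"
proof -
  have diff: "\<forall>x\<in>interior K. F differentiable (at x)"
    and inj: "inj_on (gradient F) (interior K)"
    using leg bij_betw_imp_inj_on unfolding legendre_def by blast+
  obtain D1 D2 where "(F has_derivative D1) (at P1)" "(F has_derivative D2) (at P2)"
    using diff P unfolding differentiable_def by blast
  moreover from this have "D1 = D2" using r const by (rule has_derivative_eq_of_const_diff)
  ultimately have "gradient F P1 = gradient F P2" by (intro gradient_eq_of_has_derivative) auto
  then show ?thesis by (rule inj_onD[OF inj _ P])
qed

lemma legendre_separable_midpoint_strict:
  fixes F :: "real^'n \<Rightarrow> real" and f :: "real \<Rightarrow> real"
  assumes leg: "legendre F K" and f: "convex_on I f" and KI: "K = {p. \<forall>i. p $ i \<in> I}"
    and F: "\<forall>p\<in>K. F p = (\<Sum>i\<in>UNIV. f (p $ i))"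
    and I: "a \<in> I" "b \<in> I" and ab: "a < b"
  shows "2 * f ((a + b) / 2) < f a + f b"
proof (rule ccontr)
  assume "\<not> ?thesis"
  then have "(f a + f b) / 2 \<le> f ((a + b) / 2)" by simp
  then obtain \<sigma> c where affine: "\<And>x. x \<in> {a..b} \<Longrightarrow> f x = c + \<sigma> * x"
    using convex_on_affine_of_midpoint[OF f I ab] by blast
  define r where "r = (b - a) / 4"
  have r: "0 < r" and rr: "a + r \<le> b - r" using ab by (simp_all add: r_def field_simps)
  have sub: "{a..b} \<subseteq> I" using atMostAtLeast_subset_convex[OF convex_on_imp_convex[OF f] I ab] .
  have near: "((\<chi> j. s) + h) $ j \<in> {a..b}" if "a + r \<le> s" "s \<le> b - r" "norm h < r" for s h j
    using component_le_norm_cart[of h j] that by auto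
  then have near_K: "(\<chi> j. s) + h \<in> K" if "a + r \<le> s" "s \<le> b - r" "norm h < r" for s h
    using sub that unfolding KI by blast
  have interior: "(\<chi> j. s) \<in> interior K" if "a + r \<le> s" "s \<le> b - r" for s
  proof (rule interiorI[of "ball (\<chi> j. s) r"])
    show "ball (\<chi> j::'n. s) r \<subseteq> K"
    proof
      fix y assume "y \<in> ball (\<chi> j::'n. s) r"
      then have "norm (y - (\<chi> j. s)) < r" by (simp add: dist_norm norm_minus_commute)
      then show "y \<in> K" using near_K[of s "y - (\<chi> j. s)"] that by simp
    qed
  qed (use r in auto)
  have F_near: "F ((\<chi> j. s) + h) = (\<Sum>j\<in>UNIV. c + \<sigma> * (s + h $ j))"
    if "a + r \<le> s" "s \<le> b - r" "norm h < r" for s h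
  proof -
    have "F ((\<chi> j. s) + h) = (\<Sum>j\<in>UNIV. f (((\<chi> j. s) + h) $ j))" using F near_K[OF that] by blast
    also have "\<dots> = (\<Sum>j\<in>UNIV. c + \<sigma> * (s + h $ j))"
      by (rule sum.cong[OF refl]) (use affine[OF near[OF that]] in simp)
    finally show ?thesis .
  qed
  have "\<forall>h. norm h < r \<longrightarrow>
      F ((\<chi> j. b - r) + h) - F ((\<chi> j. a + r) + h) = real CARD('n) * (\<sigma> * (b - a - 2 * r))"
  proof (intro allI impI)
    fix h :: "real^'n" assume h: "norm h < r"
    have "F ((\<chi> j. b - r) + h) - F ((\<chi> j. a + r) + h)
        = (\<Sum>j\<in>UNIV. (c + \<sigma> * (b - r + h $ j)) - (c + \<sigma> * (a + r + h $ j)))"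
      using F_near[OF rr order_refl h] F_near[OF order_refl rr h] by (simp only: sum_subtractf)
    also have "\<dots> = (\<Sum>j\<in>(UNIV :: 'n set). \<sigma> * (b - a - 2 * r))" by (simp add: algebra_simps)
    finally show "F ((\<chi> j. b - r) + h) - F ((\<chi> j. a + r) + h) = real CARD('n) * (\<sigma> * (b - a - 2 * r))"
      by simp
  qed
  then have "(\<chi> j. a + r) = (\<chi> j::'n. b - r)"
    by (rule legendre_eq_of_const_diff[OF leg interior[OF order_refl rr] interior[OF rr order_refl] r])
  then have "a + r = b - r" by (metis vec_lambda_beta)
  then show False using ab r_def by (simp add: field_simps)
qed

lemma separable_bregman_less_top:
  fixes F :: "real^'n \<Rightarrow> real" and f :: "real \<Rightarrow> real"
  assumes f: "convex_on I f" and KI: "K = {p. \<forall>i. p $ i \<in> I}"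
    and F: "\<forall>p\<in>K. F p = (\<Sum>i\<in>UNIV. f (p $ i))"
    and K: "convex K" and K_orth: "nonneg_orthant \<subseteq> K"
    and p: "p \<in> K" and q: "q \<in> nonneg_orthant" and le: "\<forall>i. p $ i \<le> q $ i"
  shows "bregman F K p q < \<infinity>"
proof -
  have qK: "q \<in> K" using q K_orth by blast
  define S where "S i = f (q $ i + 1) - f (q $ i)" for i
  have "(\<Sum>i\<in>UNIV. (p - q) $ i * S i) \<le> diff_quotient F q (p - q) t" if t: "0 < t" "t \<le> 1" for t
  proof -
    define z where "z = q + t *\<^sub>R (p - q)"
    have zK: "z \<in> K" using convex_segment_mem[OF K qK p] t unfolding z_def by simp
    have "t * ((p - q) $ i * S i) \<le> f (z $ i) - f (q $ i)" for i
    proof -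
      have "q $ i + 1 \<in> I"
        using nonneg_mem_of_orthant_subset[OF KI K_orth] q by (simp add: nonneg_orthant_def)
      moreover have "q $ i \<in> I" "q $ i + t * (p $ i - q $ i) \<in> I"
        using qK zK unfolding KI z_def by auto
      ultimately show ?thesis
        using convex_on_increment_ge[OF f, of "q $ i" t "p $ i - q $ i"] t le
        unfolding S_def z_def by (simp add: mult.assoc)
    qed
    then have "t * (\<Sum>i\<in>UNIV. (p - q) $ i * S i) \<le> (\<Sum>i\<in>UNIV. f (z $ i) - f (q $ i))"
      unfolding sum_distrib_left by (rule sum_mono)
    also have "\<dots> = F z - F q" using F zK qK by (simp add: sum_subtractf)
    finally show ?thesis using t unfolding diff_quotient_def z_def by (simp add: le_divide_eq mult.commute)
  qed
  then have "ereal (\<Sum>i\<in>UNIV. (p - q) $ i * S i) \<le> dir_deriv F q (p - q)" by (rule dir_deriv_ge)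
  then show ?thesis using p dir_deriv_le_diff[of F q "p - q"] unfolding bregman_less_top_iff
    by (cases "dir_deriv F q (p - q)") auto
qed

lemma dir_deriv_ge_of_diff_quotient_le:
  fixes F :: "real^'n \<Rightarrow> real"
  assumes F: "convex_on K F" and K: "convex K" and q: "q \<in> K" and u: "u \<in> K" and \<epsilon>: "0 < \<epsilon>"
    and \<delta>: "dir_deriv F q v = ereal \<delta>"
    and le: "\<And>t. 0 < t \<Longrightarrow> t \<le> \<epsilon> \<Longrightarrow> diff_quotient F q v t \<le> diff_quotient F q (u - q) t + M"
  shows "ereal (\<delta> - M) \<le> dir_deriv F q (u - q)"
proof (rule dir_deriv_ge)
  fix t :: real assume t: "0 < t" "t \<le> 1"
  define s where "s = min t \<epsilon>"
  have s: "0 < s" "s \<le> t" "s \<le> \<epsilon>" using t \<epsilon> by (auto simp: s_def)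
  have "\<delta> \<le> diff_quotient F q v s" using dir_deriv_le_diff_quotient[of s F q v] s t \<delta> by simp
  also have "\<dots> \<le> diff_quotient F q (u - q) s + M" using le s by simp
  also have "\<dots> \<le> diff_quotient F q (u - q) t + M" using diff_quotient_mono[OF F K q u s(1,2) t(2)] by simp
  finally show "\<delta> - M \<le> diff_quotient F q (u - q) t" by simp
qed

lemma separable_bregman_raise_coord_less:
  fixes F :: "real^'n \<Rightarrow> real" and f :: "real \<Rightarrow> real"
  assumes f: "convex_on I f" and KI: "K = {p. \<forall>i. p $ i \<in> I}"
    and F: "\<forall>p\<in>K. F p = (\<Sum>i\<in>UNIV. f (p $ i))"
    and K: "convex K" and F_convex: "convex_on K F"
    and strict: "2 * f (p $ k / 2) < f (p $ k) + f 0"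
    and p: "p \<in> K" and pk: "p $ k < 0" and q: "q \<in> K" "0 \<le> q $ k"
    and fin: "bregman F K p q < \<infinity>"
  shows "bregman F K (\<chi> i. if i = k then 0 else p $ i) q < bregman F K p q"
proof -
  define a where "a = p $ k"
  define p' where "p' = (\<chi> i. if i = k then 0 else p $ i)"
  define M where "M = 2 * (f (a/2) - f 0)"
  have aI: "a \<in> I" and qkI: "q $ k \<in> I" using p q unfolding KI a_def by auto
  then have "0 \<in> I"
    using atMostAtLeast_subset_convex[OF convex_on_imp_convex[OF f] aI qkI] pk q unfolding a_def by auto
  then have p'K: "p' \<in> K" using p unfolding KI p'_def by auto
  have off_k: "\<forall>i. i \<noteq> k \<longrightarrow> (q + t *\<^sub>R (p - q)) $ i = (q + t *\<^sub>R (p' - q)) $ i" for t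
    unfolding p'_def by simp
  have gap: "diff_quotient F q (p - q) t \<le> diff_quotient F q (p' - q) t + M" if t: "0 < t" "t \<le> 1/2" for t
  proof -
    define y where "y = (1 - t) * q $ k"
    have zK: "q + t *\<^sub>R (p - q) \<in> K" "q + t *\<^sub>R (p' - q) \<in> K"
      using convex_segment_mem[OF K q(1)] p p'K t by auto
    moreover have "(q + t *\<^sub>R (p' - q)) $ k = y" unfolding y_def p'_def by (simp add: algebra_simps)
    ultimately have yI: "y \<in> I" unfolding KI by force
    have "F (q + t *\<^sub>R (p - q)) - F (q + t *\<^sub>R (p' - q)) = f (y + t * a) - f y"
      using separable_diff_single_coord[OF F zK off_k] unfolding y_def a_def p'_def
      by (simp add: algebra_simps)
    also have "\<dots> \<le> t * M"
    proof -
      have "0 \<le> y" using q t unfolding y_def by simp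
      from convex_on_increment_le[OF f aI yI _ this t] show ?thesis
        using pk unfolding a_def M_def by (simp add: algebra_simps)
    qed
    finally show ?thesis using t unfolding diff_quotient_def by (simp add: field_simps)
  qed
  obtain \<delta> where \<delta>: "dir_deriv F q (p - q) = ereal \<delta>" using fin bregman_less_top_iff by blast
  have "ereal (\<delta> - M) \<le> dir_deriv F q (p' - q)"
    by (rule dir_deriv_ge_of_diff_quotient_le[OF F_convex K q(1) p'K _ \<delta>, of "1/2"]) (use gap in auto)
  then obtain e where e: "dir_deriv F q (p' - q) = ereal e" "\<delta> - M \<le> e"
    using dir_deriv_le_diff[of F q "p' - q"] by (cases "dir_deriv F q (p' - q)") auto
  have "F p - F p' = f a - f 0"
    using separable_diff_single_coord[OF F p p'K, of k] unfolding a_def p'_def by simp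
  then show ?thesis
    using bregman_real[OF p'K e(1)] bregman_real[OF p \<delta>] e(2) strict
    unfolding p'_def[symmetric] a_def[symmetric] M_def by simp
qed

lemma separable_bregman_obj_below_less_top:
  fixes F :: "real^'n \<Rightarrow> real" and f :: "real \<Rightarrow> real" and \<pi>0 \<rho> :: "'x::finite \<Rightarrow> real^'n"
  assumes D: "\<forall>x. 0 < D x" and f: "convex_on I f" and KI: "K = {p. \<forall>i. p $ i \<in> I}"
    and F: "\<forall>p\<in>K. F p = (\<Sum>i\<in>UNIV. f (p $ i))"
    and K: "convex K" and K_orth: "nonneg_orthant \<subseteq> K"
    and \<pi>0: "\<forall>x. \<pi>0 x \<in> nonneg_orthant" and \<rho>: "\<forall>x. \<rho> x \<in> nonneg_orthant"
    and le: "\<forall>x i. \<rho> x $ i \<le> \<pi>0 x $ i"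
  shows "bregman_obj D F K \<pi>0 \<rho> < \<infinity>"
  unfolding bregman_obj_less_top_iff[OF D]
proof
  fix x
  show "bregman F K (\<rho> x) (\<pi>0 x) < \<infinity>"
    using separable_bregman_less_top[OF f KI F K K_orth _ \<pi>0[rule_format]] \<rho> K_orth le by blast
qed

lemma coherent_minimizer_nonneg_separable:
  fixes D :: "'x::finite \<Rightarrow> real" and \<pi>0 \<pi>bar :: "'x \<Rightarrow> real^'n" and f :: "real \<Rightarrow> real"
  assumes D: "\<forall>x. 0 < D x" and invol: "\<forall>x. \<Phi> (\<Phi> x) = x"
    and \<pi>0: "\<forall>x. \<pi>0 x \<in> nonneg_orthant"
    and leg: "legendre F K" and K: "convex K" and K_orth: "nonneg_orthant \<subseteq> K"
    and f: "convex_on I f" and KI: "K = {p. \<forall>i. p $ i \<in> I}"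
    and F: "\<forall>p\<in>K. F p = (\<Sum>i\<in>UNIV. f (p $ i))"
    and min_mem: "\<pi>bar \<in> coh_lin \<Phi>"
    and min_opt: "\<forall>\<pi>\<in>coh_lin \<Phi>. bregman_obj D F K \<pi>0 \<pi>bar \<le> bregman_obj D F K \<pi>0 \<pi>"
  shows "\<forall>x. \<pi>bar x \<in> nonneg_orthant"
proof (rule ccontr)
  assume "\<not> ?thesis"
  then obtain x0 k where neg: "\<pi>bar x0 $ k < 0" unfolding nonneg_orthant_def by (auto simp: not_le)
  have F_convex: "convex_on K F" using leg unfolding legendre_def by blast
  have \<pi>0_K: "\<pi>0 x \<in> K" for x using \<pi>0 K_orth by blast
  define \<rho> where "\<rho> x = (\<chi> i. min (\<pi>0 x $ i) (\<pi>0 (\<Phi> x) $ i))" for x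
  have \<rho>_coh: "\<rho> \<in> coh_lin \<Phi>" unfolding coh_lin_iff \<rho>_def using invol by (simp add: min.commute)
  have "bregman_obj D F K \<pi>0 \<rho> < \<infinity>"
    using \<pi>0 by (intro separable_bregman_obj_below_less_top[OF D f KI F K K_orth \<pi>0])
      (auto simp: \<rho>_def nonneg_orthant_def)
  then have fin: "\<forall>x. bregman F K (\<pi>bar x) (\<pi>0 x) < \<infinity>"
    by (rule coherent_minimizer_bregman_less_top[OF D \<rho>_coh _ min_opt])
  then have \<pi>bar_K: "\<pi>bar x \<in> K" for x unfolding bregman_less_top_iff by blast
  define \<pi>' where "\<pi>' x = (\<chi> i. if i = k then max (\<pi>bar x $ k) 0 else \<pi>bar x $ i)" for x
  have \<pi>bar_coh: "\<pi>bar (\<Phi> x) = \<pi>bar x" for x using min_mem unfolding coh_lin_iff by blast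
  have \<pi>'_coh: "\<pi>' \<in> coh_lin \<Phi>" unfolding coh_lin_iff \<pi>'_def \<pi>bar_coh by simp
  have raise: "bregman F K (\<pi>' x) (\<pi>0 x) < bregman F K (\<pi>bar x) (\<pi>0 x)" if "\<pi>bar x $ k < 0" for x
  proof -
    have "\<pi>' x = (\<chi> i. if i = k then 0 else \<pi>bar x $ i)" using that by (simp add: \<pi>'_def vec_eq_iff)
    moreover have "2 * f (\<pi>bar x $ k / 2) < f (\<pi>bar x $ k) + f 0"
      using legendre_separable_midpoint_strict[OF leg f KI F _ _ that] \<pi>bar_K[of x]
        nonneg_mem_of_orthant_subset[OF KI K_orth order_refl] unfolding KI by simp
    ultimately show ?thesis
      using separable_bregman_raise_coord_less[OF f KI F K F_convex _ \<pi>bar_K that \<pi>0_K] \<pi>0 fin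
      by (simp add: nonneg_orthant_def)
  qed
  have "\<pi>' x = \<pi>bar x" if "\<not> \<pi>bar x $ k < 0" for x using that by (simp add: \<pi>'_def vec_eq_iff)
  then have "bregman F K (\<pi>' x) (\<pi>0 x) \<le> bregman F K (\<pi>bar x) (\<pi>0 x)" for x
    using raise[of x] by (cases "\<pi>bar x $ k < 0") auto
  moreover have "bregman_obj D F K \<pi>0 \<pi>bar < \<infinity>"
    using fin by (rule bregman_obj_less_top_iff[OF D, THEN iffD2])
  ultimately have "bregman_obj D F K \<pi>0 \<pi>' < bregman_obj D F K \<pi>0 \<pi>bar"
    by (rule bregman_obj_strict_mono[of D F K \<pi>' \<pi>0 \<pi>bar x0, OF D _ raise[OF neg]])
  then show False using min_opt \<pi>'_coh by (simp add: not_le[symmetric])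
qed

theorem theorem11:
  fixes D :: "'x::finite \<Rightarrow> real"
    and \<Phi> :: "'x \<Rightarrow> 'x"
    and \<pi>0 :: "'x \<Rightarrow> real^'y::finite"
    and F :: "real^'y \<Rightarrow> real"
    and K :: "(real^'y) set"
    and \<pi>bar :: "'x \<Rightarrow> real^'y"
  assumes D_pos: "\<forall>x. 0 < D x" and D_sum: "(\<Sum>x\<in>UNIV. D x) = 1"
    and invol: "\<forall>x. \<Phi> (\<Phi> x) = x"
    and pi0: "\<forall>x. \<pi>0 x \<in> prob_simplex"
    and leg: "legendre F K"
    and K_closed: "closed K" and K_convex: "convex K"
    and K_orth: "nonneg_orthant \<subseteq> K"
    and F_form:
      "(\<exists>A b. transpose A = A \<and> (\<forall>v. v \<noteq> 0 \<longrightarrow> 0 < v \<bullet> (A *v v)) \<and>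
              (\<forall>p\<in>K. F p = (1/2) * (p \<bullet> (A *v p)) + b \<bullet> p))
       \<or> (\<exists>(f::real \<Rightarrow> real) I. convex I \<and> convex_on I f \<and> K = {p. \<forall>i. p $ i \<in> I} \<and>
              (\<forall>p\<in>K. F p = (\<Sum>i\<in>UNIV. f (p $ i))))"
    and min_mem: "\<pi>bar \<in> coh_lin \<Phi>"
    and min_opt: "\<forall>\<pi>\<in>coh_lin \<Phi>. bregman_obj D F K \<pi>0 \<pi>bar \<le> bregman_obj D F K \<pi>0 \<pi>"
  shows "\<pi>bar \<in> coh_pos \<Phi>"
proof -
  have \<pi>0: "\<forall>x. \<pi>0 x \<in> nonneg_orthant" using pi0 prob_simplex_subset_nonneg_orthant by blast
  from F_form have "\<forall>x. \<pi>bar x \<in> nonneg_orthant"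
  proof (elim disjE exE conjE)
    fix A b
    assume "transpose A = A" "\<forall>v. v \<noteq> 0 \<longrightarrow> 0 < v \<bullet> (A *v v)"
      "\<forall>p\<in>K. F p = (1/2) * (p \<bullet> (A *v p)) + b \<bullet> p"
    then show ?thesis
      using coherent_minimizer_nonneg_quadratic[OF D_pos invol \<pi>0 K_convex K_orth] min_mem min_opt
      by blast
  next
    fix f :: "real \<Rightarrow> real" and I
    assume "convex_on I f" "K = {p. \<forall>i. p $ i \<in> I}" "\<forall>p\<in>K. F p = (\<Sum>i\<in>UNIV. f (p $ i))"
    then show ?thesis
      using coherent_minimizer_nonneg_separable[OF D_pos invol \<pi>0 leg K_convex K_orth] min_mem min_opt
      by blast
  qed
  then show ?thesis using min_mem unfolding coh_pos_def by blast
qed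

end
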